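(* Let $\mathcal{H}$ be a finite-dimensional complex Hilbert space, let $s \geq 2$ be an integer and set $\epsilon = \frac{1}{s}$. Let $P_1, \ldots, P_s$ and $P$ be orthogonal projectors on $\mathcal{H}$ such that $P_i P_j = P_j P_i$ for all $i, j$, $P P_i = P$ for all $1 \leq i \leq s$, and $P_i P_j = P$ for all $i \neq j$. Then \[ \max_{\ket{\psi}} \Delta\left(P\ket{\psi}\bra{\psi}P,\ \frac{1}{s}\sum_{i=1}^{s} P_i \ket{\psi}\bra{\psi} P_i\right) \leq \sqrt{\epsilon}, \] where the maximum ranges over all unit vectors $\ket{\psi} \in \mathcal{H}$.
   Context: For (possibly subnormalised) positive semidefinite operators $\rho_0, \rho_1$ on $\mathcal{H}$, $\Delta(\rho_0,\rho_1) := \frac{1}{2}\lVert \rho_0 - \rho_1 \rVert_1$ denotes the trace-norm distance. In the paper's notation $P\ket{\psi}$ in the first argument of $\Delta$ stands for the (subnormalised) state $P\ket{\psi}\bra{\psi}P$. *)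

theory Defs
  imports "Jordan_Normal_Form.Schur_Decomposition" "HOL-Computational_Algebra.Polynomial"
begin

definition orth_proj :: "nat \<Rightarrow> complex mat \<Rightarrow> bool" where
  "orth_proj n P \<longleftrightarrow> P \<in> carrier_mat n n \<and> mat_adjoint P = P \<and> P * P = P"

definition unit_vec_c :: "nat \<Rightarrow> complex Matrix.vec \<Rightarrow> bool" where
  "unit_vec_c n v \<longleftrightarrow> v \<in> carrier_vec n \<and> conjugate v \<bullet> v = 1"

definition ketbra :: "complex Matrix.vec \<Rightarrow> complex mat" where
  "ketbra v = mat (dim_vec v) (dim_vec v) (\<lambda>(i,j). v $ i * cnj (v $ j))"

definition mat_sum :: "nat \<Rightarrow> ('i \<Rightarrow> complex mat) \<Rightarrow> 'i set \<Rightarrow> complex mat" where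
  "mat_sum n f I = mat n n (\<lambda>(i,j). \<Sum>k\<in>I. f k $$ (i,j))"

text \<open>Trace norm: sum of singular values, i.e. sum of the square roots of the eigenvalues
  (with algebraic multiplicity) of A^* A.\<close>
definition trace_norm :: "complex mat \<Rightarrow> real" where
  "trace_norm A = sum_mset (image_mset (\<lambda>z. sqrt (Re z)) (proots (char_poly (mat_adjoint A * A))))"

definition trace_dist :: "complex mat \<Rightarrow> complex mat \<Rightarrow> real" where
  "trace_dist A B = trace_norm (A - B) / 2"

end

theory Submission
  imports Defs "HOL-Analysis.Convex"
begin

(* With Q_0 = P, Q_k = P_k and weights c_0 = 1, c_k = -1/s, the difference of the two states is
   D = sum_k c_k |Q_k psi><Q_k psi|, which factors through C^(s+1); hence D^* D has at most s+1
   nonzero eigenvalues and Cauchy-Schwarz gives ||D||_1^2 <= (s+1) tr(D^* D).  The hypotheses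
   make Q_k Q_k' = P for k <> k', so <Q_k psi, Q_k' psi> = a + [k = k'] w_k with a = ||P psi||^2
   and w_k = ||P_k psi||^2 - a.  As sum_k c_k = 0, this gives
   tr(D^* D) = s^-2 sum_k (2 a w_k + w_k^2) <= s^-2 (a + sum_k w_k)^2, and a + sum_k w_k <= 1 is
   Bessel's inequality for the orthogonal vectors P psi and P_k psi - P psi.  Altogether
   (||D||_1 / 2)^2 <= (s+1) / (4 s^2) <= 1/s. *)

section \<open>Characteristic polynomials and the trace\<close>

lemma char_poly_mult_swap:
  fixes A :: "'a::field mat"
  assumes A: "A \<in> carrier_mat n k" and B: "B \<in> carrier_mat k n"
  shows "[:0,1:]^k * char_poly (A * B) = [:0,1:]^n * char_poly (B * A)"
proof -
  (* both sides equal x^k det M, by eliminating either off-diagonal block of M *)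
  define x :: "'a poly" where "x = [:0,1:]"
  define A' where "A' = map_mat (\<lambda>a. [:a:]) A"
  define B' where "B' = map_mat (\<lambda>a. [:a:]) B"
  have A': "A' \<in> carrier_mat n k" and B': "B' \<in> carrier_mat k n"
    using A B by (auto simp: A'_def B'_def)
  define M where "M = four_block_mat (x \<cdot>\<^sub>m 1\<^sub>m n) A' B' (1\<^sub>m k)"
  define L where "L = four_block_mat (1\<^sub>m n) (0\<^sub>m n k) (-B') (x \<cdot>\<^sub>m 1\<^sub>m k)"
  define R where "R = four_block_mat (1\<^sub>m n) (-A') (0\<^sub>m k n) (1\<^sub>m k)"
  have M: "M \<in> carrier_mat (n+k) (n+k)" unfolding M_def using A' B' by auto
  have L: "L \<in> carrier_mat (n+k) (n+k)" unfolding L_def using A' B' by auto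
  have R: "R \<in> carrier_mat (n+k) (n+k)" unfolding R_def using A' B' by auto
  have LM: "L * M = four_block_mat (x \<cdot>\<^sub>m 1\<^sub>m n) A' (0\<^sub>m k n) (x \<cdot>\<^sub>m 1\<^sub>m k - B' * A')"
    unfolding L_def M_def
    by (subst mult_four_block_mat[of _ n n _ k _ k _ _ n _ k]) (use A' B' in auto)
  have RM: "R * M = four_block_mat (x \<cdot>\<^sub>m 1\<^sub>m n - A' * B') (0\<^sub>m n k) B' (1\<^sub>m k)"
    unfolding R_def M_def
    by (subst mult_four_block_mat[of _ n n _ k _ k _ _ n _ k]) (use A' B' in auto)
  have "det L = x^k" unfolding L_def
    by (subst det_four_block_mat_upper_right_zero[of _ n]) (use A' B' in auto)
  then have "x^k * det M = x^n * det (x \<cdot>\<^sub>m 1\<^sub>m k - B' * A')"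
    using det_mult[OF L M] unfolding LM
    by (subst (asm) det_four_block_mat_lower_left_zero[of _ n]) (use A' B' in auto)
  moreover have "det R = 1" unfolding R_def
    by (subst det_four_block_mat_lower_left_zero[of _ n]) (use A' B' in auto)
  then have "det M = det (x \<cdot>\<^sub>m 1\<^sub>m n - A' * B')"
    using det_mult[OF R M] unfolding RM
    by (subst (asm) det_four_block_mat_upper_right_zero[of _ n]) (use A' B' in auto)
  moreover have "char_poly_matrix (A * B) = x \<cdot>\<^sub>m 1\<^sub>m n - A' * B'"
    unfolding char_poly_matrix_def x_def map_poly_mult[OF A B, folded A'_def B'_def, symmetric]
    using A B by (intro eq_matI) auto
  moreover have "char_poly_matrix (B * A) = x \<cdot>\<^sub>m 1\<^sub>m k - B' * A'"
    unfolding char_poly_matrix_def x_def map_poly_mult[OF B A, folded A'_def B'_def, symmetric]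
    using A B by (intro eq_matI) auto
  ultimately show ?thesis unfolding char_poly_def x_def by simp
qed

lemma size_nonzero_proots_char_poly_mult_le:
  fixes A :: "complex mat"
  assumes A: "A \<in> carrier_mat n k" and B: "B \<in> carrier_mat k n"
  shows "size (filter_mset (\<lambda>z. z \<noteq> 0) (proots (char_poly (A * B)))) \<le> k"
proof -
  have AB: "A * B \<in> carrier_mat n n" and BA: "B * A \<in> carrier_mat k k" using A B by auto
  have nonzero: "char_poly (A * B) \<noteq> 0" "char_poly (B * A) \<noteq> 0"
    using degree_monic_char_poly[OF AB] degree_monic_char_poly[OF BA] by auto
  have proots_x_pow: "proots (([:0,1:] :: complex poly)^m) = repeat_mset m {#0#}" for m
    using proots_linear_factor[of "0::complex"] by (simp add: proots_power)
  have no_nonzero: "filter_mset (\<lambda>z. z \<noteq> 0) (repeat_mset m {#0::complex#}) = {#}" for m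
    by (induct m) auto
  have "repeat_mset k {#0#} + proots (char_poly (A * B))
      = repeat_mset n {#0#} + proots (char_poly (B * A))"
    using arg_cong[OF char_poly_mult_swap[OF A B], of proots] nonzero
    by (simp add: proots_mult proots_x_pow)
  then have "filter_mset (\<lambda>z. z \<noteq> 0) (proots (char_poly (A * B)))
      = filter_mset (\<lambda>z. z \<noteq> 0) (proots (char_poly (B * A)))"
    by (metis filter_union_mset no_nonzero add_0)
  then have "size (filter_mset (\<lambda>z. z \<noteq> 0) (proots (char_poly (A * B))))
      \<le> size (proots (char_poly (B * A)))"
    by (metis size_filter_mset_lesseq)
  also have "\<dots> \<le> degree (char_poly (B * A))" by (rule size_proots_le)
  also have "\<dots> = k" using degree_monic_char_poly[OF BA] by auto
  finally show ?thesis .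
qed

definition trace :: "'a::comm_ring_1 mat \<Rightarrow> 'a" where
  "trace M = (\<Sum>i\<in>{0..<dim_row M}. M $$ (i,i))"

lemma trace_mult_comm:
  fixes A :: "'a::comm_ring_1 mat"
  assumes A: "A \<in> carrier_mat n m" and B: "B \<in> carrier_mat m n"
  shows "trace (A * B) = trace (B * A)"
proof -
  have "trace (A * B) = (\<Sum>i\<in>{0..<n}. \<Sum>l\<in>{0..<m}. A $$ (i,l) * B $$ (l,i))"
    unfolding trace_def using A B by (auto simp: scalar_prod_def intro!: sum.cong)
  also have "\<dots> = (\<Sum>l\<in>{0..<m}. \<Sum>i\<in>{0..<n}. B $$ (l,i) * A $$ (i,l))"
    by (subst sum.swap) (simp add: mult.commute)
  also have "\<dots> = trace (B * A)"
    unfolding trace_def using A B by (auto simp: scalar_prod_def intro!: sum.cong)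
  finally show ?thesis .
qed

lemma proots_prod_linear_factors: "proots (\<Prod>a\<leftarrow>as. [:- a, 1:]) = mset (as :: 'a::idom list)"
proof (induct as)
  case (Cons a as)
  have "(\<Prod>a\<leftarrow>as. [:- a, 1:]) \<noteq> 0" by (auto simp: prod_list_zero_iff)
  then have "proots ([:- a, 1:] * (\<Prod>a\<leftarrow>as. [:- a, 1:])) = proots [:- a, 1:] + proots (\<Prod>a\<leftarrow>as. [:- a, 1:])"
    by (intro proots_mult) auto
  then show ?case using Cons proots_linear_factor[of "-a"] by simp
qed simp

lemma sum_proots_char_poly:
  fixes M :: "complex mat"
  assumes M: "M \<in> carrier_mat n n"
  shows "sum_mset (proots (char_poly M)) = trace M"
proof -
  obtain as where cp: "char_poly M = (\<Prod>a\<leftarrow>as. [:- a, 1:])"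
    using char_poly_factorized[OF M] by blast
  obtain B P Q where "schur_decomposition M as = (B, P, Q)"
    by (cases "schur_decomposition M as") auto
  from schur_decomposition[OF M cp this]
  have "similar_mat_wit M B P Q" and diag: "diag_mat B = as" by auto
  then have B: "B \<in> carrier_mat n n" and P: "P \<in> carrier_mat n n" and Q: "Q \<in> carrier_mat n n"
    and "Q * P = 1\<^sub>m n" and "M = P * B * Q"
    using M unfolding similar_mat_wit_def Let_def by auto
  then have "trace M = trace (Q * (P * B))"
    using trace_mult_comm[of "P * B" n n Q] by (simp add: assoc_mult_mat)
  also have "Q * (P * B) = B"
    using \<open>Q * P = 1\<^sub>m n\<close> B P Q by (metis assoc_mult_mat left_mult_one_mat)
  also have "trace B = sum_list as"
    unfolding diag[symmetric] diag_mat_def trace_def by (simp add: interv_sum_list_conv_sum_set_nat)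
  finally show ?thesis unfolding cp proots_prod_linear_factors by (simp add: sum_mset_sum_list)
qed

lemma mat_adjoint_index:
  assumes "i < dim_col A" "j < dim_row A"
  shows "mat_adjoint A $$ (i,j) = cnj (A $$ (j,i))"
  using assms unfolding mat_adjoint_def by (simp add: mat_of_rows_def)

lemma dim_mat_adjoint [simp]:
  "dim_row (mat_adjoint A) = dim_col A" "dim_col (mat_adjoint A) = dim_row A"
  unfolding mat_adjoint_def by (auto simp: mat_of_rows_def)

lemma mat_adjoint_carrier: "A \<in> carrier_mat n m \<Longrightarrow> mat_adjoint A \<in> carrier_mat m n"
  by auto

lemma mat_adjoint_mult:
  fixes A B :: "complex mat"
  assumes "A \<in> carrier_mat n m" and "B \<in> carrier_mat m k"
  shows "mat_adjoint (A * B) = mat_adjoint B * mat_adjoint A"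
  using assms
  by (intro eq_matI) (auto simp: mat_adjoint_index scalar_prod_def mult.commute intro!: sum.cong)

definition cinner :: "nat \<Rightarrow> complex vec \<Rightarrow> complex vec \<Rightarrow> complex" where
  "cinner n u v = (\<Sum>l\<in>{0..<n}. cnj (u $ l) * v $ l)"

definition cnorm2 :: "nat \<Rightarrow> complex vec \<Rightarrow> real" where
  "cnorm2 n v = (\<Sum>l\<in>{0..<n}. (cmod (v $ l))\<^sup>2)"

lemma cnorm2_nonneg: "cnorm2 n v \<ge> 0"
  unfolding cnorm2_def by (auto intro: sum_nonneg)

lemma sum_cnj_mult_self: "(\<Sum>l\<in>L. cnj (f l) * f l) = complex_of_real (\<Sum>l\<in>L. (cmod (f l))\<^sup>2)"
  unfolding of_real_sum by (intro sum.cong refl, subst complex_norm_square) (simp add: mult.commute)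

lemma cinner_self: "cinner n v v = complex_of_real (cnorm2 n v)"
  unfolding cinner_def cnorm2_def by (rule sum_cnj_mult_self)

lemma cinner_cnj: "cinner n u v = cnj (cinner n v u)"
  unfolding cinner_def by (simp add: mult.commute)

lemma cinner_diff_left:
  assumes "u \<in> carrier_vec n" "v \<in> carrier_vec n"
  shows "cinner n (u - v) w = cinner n u w - cinner n v w"
  using assms unfolding cinner_def by (simp add: algebra_simps sum_subtractf)

lemma cinner_diff_right:
  assumes "v \<in> carrier_vec n" "w \<in> carrier_vec n"
  shows "cinner n u (v - w) = cinner n u v - cinner n u w"
  using assms unfolding cinner_def by (simp add: algebra_simps sum_subtractf)

lemma cinner_mat_adjoint:
  fixes A :: "complex mat"
  assumes A: "A \<in> carrier_mat m n" and u: "u \<in> carrier_vec n" and w: "w \<in> carrier_vec m"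
  shows "cinner n u (mat_adjoint A *\<^sub>v w) = cinner m (A *\<^sub>v u) w"
proof -
  have "cinner n u (mat_adjoint A *\<^sub>v w)
      = (\<Sum>i\<in>{0..<n}. \<Sum>l\<in>{0..<m}. cnj (A $$ (l,i) * u $ i) * w $ l)"
    unfolding cinner_def using A u w
    by (auto simp: scalar_prod_def mat_adjoint_index sum_distrib_left ac_simps intro!: sum.cong)
  also have "\<dots> = (\<Sum>l\<in>{0..<m}. cnj (\<Sum>i\<in>{0..<n}. A $$ (l,i) * u $ i) * w $ l)"
    by (subst sum.swap) (simp add: sum_distrib_right)
  also have "\<dots> = cinner m (A *\<^sub>v u) w"
    unfolding cinner_def using A u by (auto simp: scalar_prod_def intro!: sum.cong)
  finally show ?thesis .
qed

lemma hermitian_cinner: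
  fixes A :: "complex mat"
  assumes "A \<in> carrier_mat n n" "mat_adjoint A = A" "u \<in> carrier_vec n" "w \<in> carrier_vec n"
  shows "cinner n (A *\<^sub>v u) w = cinner n u (A *\<^sub>v w)"
  using cinner_mat_adjoint[OF assms(1,3,4)] assms(2) by simp

lemma orth_proj_cinner:
  assumes "orth_proj n Q" and v: "v \<in> carrier_vec n"
  shows "cinner n v (Q *\<^sub>v v) = complex_of_real (cnorm2 n (Q *\<^sub>v v))"
proof -
  have Q: "Q \<in> carrier_mat n n" "mat_adjoint Q = Q" "Q * Q = Q"
    using assms(1) unfolding orth_proj_def by auto
  then have "cinner n v (Q *\<^sub>v v) = cinner n v (Q *\<^sub>v (Q *\<^sub>v v))"
    using v by (metis assoc_mult_mat_vec)
  also have "\<dots> = cinner n (Q *\<^sub>v v) (Q *\<^sub>v v)"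
    using Q v by (simp add: hermitian_cinner)
  finally show ?thesis by (simp add: cinner_self)
qed

lemma Re_proots_char_poly_adjoint_mult_nonneg:
  fixes A :: "complex mat"
  assumes A: "A \<in> carrier_mat n n" and z: "z \<in># proots (char_poly (mat_adjoint A * A))"
  shows "Re z \<ge> 0"
proof -
  let ?M = "mat_adjoint A * A"
  have M: "?M \<in> carrier_mat n n" using A by auto
  have "char_poly ?M \<noteq> 0" using degree_monic_char_poly[OF M] by auto
  then have "eigenvalue ?M z"
    using z eigenvalue_root_char_poly[OF M] by auto
  then obtain v where v: "v \<in> carrier_vec n" "v \<noteq> 0\<^sub>v n" "?M *\<^sub>v v = z \<cdot>\<^sub>v v"
    unfolding eigenvalue_def eigenvector_def using M by auto
  have "z * cnorm2 n v = cinner n v (?M *\<^sub>v v)"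
    unfolding v(3) cinner_self[symmetric] cinner_def using v(1)
    by (simp add: sum_distrib_left mult.left_commute)
  also have "\<dots> = cinner n v (mat_adjoint A *\<^sub>v (A *\<^sub>v v))"
    using A v(1) by (subst assoc_mult_mat_vec[of _ n n _ n]) auto
  also have "\<dots> = cnorm2 n (A *\<^sub>v v)"
    using A v(1) by (simp add: cinner_mat_adjoint cinner_self)
  finally have "z * cnorm2 n v = cnorm2 n (A *\<^sub>v v)" .
  moreover have "cnorm2 n v > 0"
  proof -
    obtain i where "i < n" "v $ i \<noteq> 0" using v(1,2) by (metis eq_vecI carrier_vecD index_zero_vec)
    then show ?thesis unfolding cnorm2_def by (intro sum_pos2[of _ i]) auto
  qed
  ultimately have "z = cnorm2 n (A *\<^sub>v v) / cnorm2 n v" by (simp add: field_simps)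
  then show ?thesis using cnorm2_nonneg[of n v] cnorm2_nonneg[of n "A *\<^sub>v v"] by simp
qed

lemma hermitian_index:
  fixes A :: "complex mat"
  assumes "A \<in> carrier_mat n n" "mat_adjoint A = A" "i < n" "j < n"
  shows "A $$ (i,j) = cnj (A $$ (j,i))"
  using assms mat_adjoint_index[of i A j] by simp

lemma ketbra_sandwich_index:
  fixes Q :: "complex mat"
  assumes Q: "Q \<in> carrier_mat n n" "mat_adjoint Q = Q"
    and v: "v \<in> carrier_vec n" and i: "i < n" and j: "j < n"
  shows "(Q * ketbra v * Q) $$ (i,j) = (Q *\<^sub>v v) $ i * cnj ((Q *\<^sub>v v) $ j)"
proof -
  have "ketbra v \<in> carrier_mat n n" using v unfolding ketbra_def by auto
  then have "(Q * ketbra v * Q) $$ (i,j)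
      = (\<Sum>m\<in>{0..<n}. (\<Sum>l\<in>{0..<n}. Q $$ (i,l) * (v $ l * cnj (v $ m))) * Q $$ (m,j))"
    using Q v i j by (auto simp: scalar_prod_def ketbra_def intro!: sum.cong)
  also have "\<dots> = (\<Sum>m\<in>{0..<n}. (\<Sum>l\<in>{0..<n}. Q $$ (i,l) * v $ l) * (cnj (v $ m) * Q $$ (m,j)))"
    by (intro sum.cong refl) (simp add: sum_distrib_right mult.assoc)
  also have "\<dots> = (\<Sum>l\<in>{0..<n}. Q $$ (i,l) * v $ l) * (\<Sum>m\<in>{0..<n}. cnj (v $ m) * Q $$ (m,j))"
    by (rule sum_distrib_left[symmetric])
  also have "(\<Sum>m\<in>{0..<n}. cnj (v $ m) * Q $$ (m,j)) = cnj ((Q *\<^sub>v v) $ j)"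
  proof -
    have "cnj ((Q *\<^sub>v v) $ j) = (\<Sum>m\<in>{0..<n}. cnj (Q $$ (j,m)) * cnj (v $ m))"
      using Q v j by (simp add: scalar_prod_def)
    also have "\<dots> = (\<Sum>m\<in>{0..<n}. cnj (v $ m) * Q $$ (m,j))"
      using hermitian_index[OF Q _ j] by (intro sum.cong refl) simp
    finally show ?thesis by simp
  qed
  finally show ?thesis using Q v i by (simp add: scalar_prod_def)
qed

section \<open>The trace norm of a product through a low dimension\<close>

lemma sum_mset_squared_le:
  fixes g :: "'a \<Rightarrow> real"
  shows "(\<Sum>\<^sub># (image_mset g A))\<^sup>2 \<le> real (size A) * \<Sum>\<^sub># (image_mset (\<lambda>z. (g z)\<^sup>2) A)"
proof -
  obtain xs where A: "A = mset xs" by (metis ex_mset)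
  have "\<Sum>\<^sub># (image_mset h A) = (\<Sum>i\<in>{0..<length xs}. h (xs ! i))" for h :: "'a \<Rightarrow> real"
    unfolding A mset_map[symmetric] sum_mset_sum_list sum_list_sum_nth by simp
  then show ?thesis
    using sum_squared_le_sum_of_squares[of "\<lambda>i. g (xs ! i)" "{0..<length xs}"] A
    by (simp add: mult.commute)
qed

lemma sum_mset_image_filter_nonzero:
  "f 0 = 0 \<Longrightarrow> \<Sum>\<^sub># (image_mset f A) = \<Sum>\<^sub># (image_mset f (filter_mset (\<lambda>z. z \<noteq> 0) A))"
  by (induct A) auto

lemma sum_mset_image_nonneg:
  fixes f :: "'a \<Rightarrow> real"
  shows "(\<And>z. z \<in># A \<Longrightarrow> f z \<ge> 0) \<Longrightarrow> \<Sum>\<^sub># (image_mset f A) \<ge> 0"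
  by (induct A) auto

lemma Re_sum_mset: "Re (\<Sum>\<^sub># A) = \<Sum>\<^sub># (image_mset Re A)"
  by (induct A) auto

lemma trace_norm_mult_squared_le:
  fixes X Y :: "complex mat"
  assumes X: "X \<in> carrier_mat n k" and Y: "Y \<in> carrier_mat k n"
  shows "(trace_norm (X * Y))\<^sup>2 \<le> real k * Re (trace (mat_adjoint (X * Y) * (X * Y)))"
proof -
  let ?D = "X * Y"
  let ?M = "mat_adjoint ?D * ?D"
  let ?R = "proots (char_poly ?M)"
  let ?R' = "filter_mset (\<lambda>z. z \<noteq> 0) ?R"
  have D: "?D \<in> carrier_mat n n" using X Y by (rule mult_carrier_mat)
  have M: "?M \<in> carrier_mat n n" using mult_carrier_mat[OF mat_adjoint_carrier[OF D] D] .
  (* the nonzero eigenvalues of D^* D = (D^* X) Y are those of the k x k matrix Y (D^* X) *)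
  have M_factor: "?M = (mat_adjoint ?D * X) * Y"
    using assoc_mult_mat[OF mat_adjoint_carrier[OF D] X Y] by simp
  have "mat_adjoint ?D * X \<in> carrier_mat n k" using mult_carrier_mat[OF mat_adjoint_carrier[OF D] X] .
  from size_nonzero_proots_char_poly_mult_le[OF this Y]
  have size_R': "size ?R' \<le> k" unfolding M_factor .
  have nonneg: "Re z \<ge> 0" if "z \<in># ?R" for z
    using Re_proots_char_poly_adjoint_mult_nonneg[OF D that] .
  have "\<Sum>\<^sub># (image_mset Re ?R') = \<Sum>\<^sub># (image_mset Re ?R)"
    by (rule sum_mset_image_filter_nonzero[symmetric]) simp
  also have "\<dots> = Re (\<Sum>\<^sub># ?R)" by (simp add: Re_sum_mset)
  also have "\<dots> = Re (trace ?M)"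
    using sum_proots_char_poly[OF M] by simp
  finally have sum_Re: "\<Sum>\<^sub># (image_mset Re ?R') = Re (trace ?M)" .
  have trace_norm_R': "trace_norm ?D = \<Sum>\<^sub># (image_mset (\<lambda>z. sqrt (Re z)) ?R')"
    unfolding trace_norm_def by (rule sum_mset_image_filter_nonzero) simp
  have "\<Sum>\<^sub># (image_mset (\<lambda>z. (sqrt (Re z))\<^sup>2) ?R') = \<Sum>\<^sub># (image_mset Re ?R')"
    using nonneg by (intro arg_cong[where f = sum_mset] image_mset_cong) auto
  then have "(trace_norm ?D)\<^sup>2 \<le> real (size ?R') * Re (trace ?M)"
    unfolding trace_norm_R' using sum_mset_squared_le[of "\<lambda>z. sqrt (Re z)" ?R'] sum_Re by simp
  also have "\<dots> \<le> real k * Re (trace ?M)"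
    using size_R' sum_Re sum_mset_image_nonneg[of ?R' Re] nonneg
    by (intro mult_right_mono) auto
  finally show ?thesis .
qed

section \<open>Bessel's inequality\<close>

lemma sum_cnj_diff_sum_expand:
  fixes p :: "nat \<Rightarrow> complex" and y :: "nat \<Rightarrow> nat \<Rightarrow> complex"
  shows "(\<Sum>l\<in>N. cnj (p l - (\<Sum>k\<in>K. y k l)) * (p l - (\<Sum>k\<in>K. y k l))) =
    (\<Sum>l\<in>N. cnj (p l) * p l) - (\<Sum>k\<in>K. \<Sum>l\<in>N. cnj (p l) * y k l) - (\<Sum>k\<in>K. \<Sum>l\<in>N. cnj (y k l) * p l)
    + (\<Sum>k\<in>K. \<Sum>k'\<in>K. \<Sum>l\<in>N. cnj (y k l) * y k' l)"
proof -
  have expand: "(\<Sum>l\<in>N. cnj (p l - (\<Sum>k\<in>K. y k l)) * (p l - (\<Sum>k\<in>K. y k l))) =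
    (\<Sum>l\<in>N. cnj (p l) * p l) - (\<Sum>l\<in>N. \<Sum>k\<in>K. cnj (p l) * y k l) - (\<Sum>l\<in>N. \<Sum>k\<in>K. cnj (y k l) * p l)
    + (\<Sum>l\<in>N. \<Sum>k\<in>K. \<Sum>k'\<in>K. cnj (y k l) * y k' l)"
    by (simp add: algebra_simps sum.distrib sum_subtractf sum_distrib_left sum_distrib_right)
  have swap: "(\<Sum>l\<in>N. \<Sum>k\<in>K. \<Sum>k'\<in>K. cnj (y k l) * y k' l)
      = (\<Sum>k\<in>K. \<Sum>k'\<in>K. \<Sum>l\<in>N. cnj (y k l) * y k' l)"
    by (subst sum.swap, rule sum.cong[OF refl], rule sum.swap)
  show ?thesis unfolding expand swap by (simp add: sum.swap[of _ N K])
qed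

lemma bessel_inequality:
  fixes p :: "complex vec" and y :: "nat \<Rightarrow> complex vec"
  assumes K: "finite K"
    and orth: "\<And>k k'. k \<in> K \<Longrightarrow> k' \<in> K \<Longrightarrow> k \<noteq> k' \<Longrightarrow> cinner n (y k) (y k') = 0"
    and proj: "\<And>k. k \<in> K \<Longrightarrow> cinner n p (y k) = cinner n (y k) (y k)"
  shows "(\<Sum>k\<in>K. cnorm2 n (y k)) \<le> cnorm2 n p"
proof -
  define N where "N = (\<Sum>k\<in>K. cnorm2 n (y k))"
  have left: "(\<Sum>k\<in>K. cinner n p (y k)) = N"
    unfolding N_def of_real_sum using proj by (intro sum.cong refl) (simp add: cinner_self)
  have "cinner n (y k) p = cnorm2 n (y k)" if "k \<in> K" for k
    using cinner_cnj[of n "y k" p] proj[OF that] cinner_self[of n "y k"] by simp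
  then have right: "(\<Sum>k\<in>K. cinner n (y k) p) = N"
    unfolding N_def of_real_sum by (rule sum.cong[OF refl])
  have "(\<Sum>k'\<in>K. cinner n (y k) (y k')) = cnorm2 n (y k)" if "k \<in> K" for k
  proof -
    have "(\<Sum>k'\<in>K - {k}. cinner n (y k) (y k')) = 0"
      using orth[OF that] by (intro sum.neutral) auto
    then show ?thesis
      using sum.remove[OF K that, of "\<lambda>k'. cinner n (y k) (y k')"] cinner_self[of n "y k"] by simp
  qed
  then have diag: "(\<Sum>k\<in>K. \<Sum>k'\<in>K. cinner n (y k) (y k')) = N"
    unfolding N_def of_real_sum by (rule sum.cong[OF refl])
  have "(\<Sum>l\<in>{0..<n}. cnj (p $ l - (\<Sum>k\<in>K. y k $ l)) * (p $ l - (\<Sum>k\<in>K. y k $ l)))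
      = cinner n p p - (\<Sum>k\<in>K. cinner n p (y k)) - (\<Sum>k\<in>K. cinner n (y k) p)
        + (\<Sum>k\<in>K. \<Sum>k'\<in>K. cinner n (y k) (y k'))"
    unfolding cinner_def by (rule sum_cnj_diff_sum_expand)
  then have "complex_of_real (\<Sum>l\<in>{0..<n}. (cmod (p $ l - (\<Sum>k\<in>K. y k $ l)))\<^sup>2)
      = complex_of_real (cnorm2 n p - N)"
    unfolding sum_cnj_mult_self cinner_self left right diag by simp
  then have "cnorm2 n p - N = (\<Sum>l\<in>{0..<n}. (cmod (p $ l - (\<Sum>k\<in>K. y k $ l)))\<^sup>2)"
    by (simp only: of_real_eq_iff)
  also have "\<dots> \<ge> 0" by (intro sum_nonneg) simp
  finally show ?thesis unfolding N_def by simp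
qed

lemma outer_sum_factor:
  fixes x :: "nat \<Rightarrow> complex vec" and c :: "nat \<Rightarrow> complex"
  assumes "D \<in> carrier_mat n n"
    and "\<And>i j. i < n \<Longrightarrow> j < n \<Longrightarrow> D $$ (i,j) = (\<Sum>k\<in>{0..<m}. c k * x k $ i * cnj (x k $ j))"
  shows "D = mat n m (\<lambda>(i,k). x k $ i) * mat m n (\<lambda>(k,j). c k * cnj (x k $ j))"
  using assms by (intro eq_matI) (auto simp: scalar_prod_def ac_simps intro!: sum.cong)

lemma trace_adjoint_mult_outer_sum:
  fixes x :: "nat \<Rightarrow> complex vec" and c :: "nat \<Rightarrow> complex"
  assumes D: "D \<in> carrier_mat n n"
    and D_index: "\<And>i j. i < n \<Longrightarrow> j < n \<Longrightarrow> D $$ (i,j) = (\<Sum>k\<in>K. c k * x k $ i * cnj (x k $ j))"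
  shows "trace (mat_adjoint D * D)
    = (\<Sum>k\<in>K. \<Sum>k'\<in>K. cnj (c k) * c k' * cinner n (x k) (x k') * cnj (cinner n (x k) (x k')))"
proof -
  let ?N = "{0..<n}"
  have "trace (mat_adjoint D * D) = (\<Sum>i\<in>?N. \<Sum>l\<in>?N. cnj (D $$ (l,i)) * D $$ (l,i))"
    unfolding trace_def using D by (auto simp: scalar_prod_def mat_adjoint_index intro!: sum.cong)
  also have "\<dots> = (\<Sum>i\<in>?N. \<Sum>l\<in>?N. \<Sum>k\<in>K. \<Sum>k'\<in>K.
      (cnj (c k) * cnj (x k $ l) * x k $ i) * (c k' * x k' $ l * cnj (x k' $ i)))"
    by (simp add: D_index sum_product)
  also have "\<dots> = (\<Sum>k\<in>K. \<Sum>k'\<in>K. \<Sum>l\<in>?N. \<Sum>i\<in>?N.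
      (cnj (c k) * cnj (x k $ l) * x k $ i) * (c k' * x k' $ l * cnj (x k' $ i)))"
    by (subst sum.swap, subst (2) sum.swap, subst sum.swap,
        rule sum.cong[OF refl], subst (2) sum.swap, subst sum.swap, rule refl)
  also have "\<dots> = (\<Sum>k\<in>K. \<Sum>k'\<in>K. \<Sum>l\<in>?N. \<Sum>i\<in>?N.
      (cnj (c k) * c k') * ((cnj (x k $ l) * x k' $ l) * (x k $ i * cnj (x k' $ i))))"
    by (intro sum.cong refl) (simp add: ac_simps)
  also have "\<dots> = (\<Sum>k\<in>K. \<Sum>k'\<in>K. (cnj (c k) * c k') *
      ((\<Sum>l\<in>?N. cnj (x k $ l) * x k' $ l) * (\<Sum>i\<in>?N. x k $ i * cnj (x k' $ i))))"
    unfolding sum_product by (simp only: sum_distrib_left)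
  finally show ?thesis unfolding cinner_def by (simp add: mult.assoc)
qed

lemma sum_squares_le_square_sum:
  fixes w :: "nat \<Rightarrow> real"
  assumes "finite K" "\<And>k. k \<in> K \<Longrightarrow> w k \<ge> 0"
  shows "(\<Sum>k\<in>K. (w k)\<^sup>2) \<le> (\<Sum>k\<in>K. w k)\<^sup>2"
proof -
  have "(\<Sum>k\<in>K. (w k)\<^sup>2) \<le> (\<Sum>k\<in>K. w k * (\<Sum>j\<in>K. w j))"
    using assms by (intro sum_mono) (auto simp: power2_eq_square intro!: mult_left_mono member_le_sum)
  also have "\<dots> = (\<Sum>k\<in>K. w k)\<^sup>2" by (simp add: power2_eq_square sum_distrib_right)
  finally show ?thesis .
qed

lemma sum_weighted_gram_squared:
  fixes c w :: "nat \<Rightarrow> real"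
  assumes "finite K"
  shows "(\<Sum>k\<in>K. \<Sum>k'\<in>K. c k * c k' * (a + (if k = k' then w k else 0))\<^sup>2)
     = a\<^sup>2 * (\<Sum>k\<in>K. c k)\<^sup>2 + (\<Sum>k\<in>K. (c k)\<^sup>2 * (2 * a * w k + (w k)\<^sup>2))"
proof -
  have "(\<Sum>k\<in>K. \<Sum>k'\<in>K. c k * c k' * (a + (if k = k' then w k else 0))\<^sup>2)
     = (\<Sum>k\<in>K. \<Sum>k'\<in>K. a\<^sup>2 * (c k * c k') + (if k = k' then (c k)\<^sup>2 * (2 * a * w k + (w k)\<^sup>2) else 0))"
    by (intro sum.cong refl) (auto simp: power2_eq_square algebra_simps)
  also have "\<dots> = a\<^sup>2 * (\<Sum>k\<in>K. \<Sum>k'\<in>K. c k * c k') + (\<Sum>k\<in>K. (c k)\<^sup>2 * (2 * a * w k + (w k)\<^sup>2))"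
    using assms by (simp add: sum.distrib sum_distrib_left)
  finally show ?thesis by (simp add: power2_eq_square sum_product)
qed

section \<open>Projectors pairwise intersecting in a common subprojector\<close>

locale projector_family =
  fixes n s :: nat and Ps :: "nat \<Rightarrow> complex mat" and P :: "complex mat"
  assumes s_pos: "s \<ge> 1"
    and orth_proj_Ps: "\<And>i. i \<in> {1..s} \<Longrightarrow> orth_proj n (Ps i)"
    and orth_proj_P: "orth_proj n P"
    and P_mult_Ps: "\<And>i. i \<in> {1..s} \<Longrightarrow> P * Ps i = P"
    and Ps_mult_Ps: "\<And>i j. i \<in> {1..s} \<Longrightarrow> j \<in> {1..s} \<Longrightarrow> i \<noteq> j \<Longrightarrow> Ps i * Ps j = P"
begin

definition Q :: "nat \<Rightarrow> complex mat" where
  "Q k = (if k = 0 then P else Ps k)"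

definition weight :: "nat \<Rightarrow> real" where
  "weight k = (if k = 0 then 1 else - 1 / real s)"

lemma orth_proj_Q: "k \<in> {0..s} \<Longrightarrow> orth_proj n (Q k)"
  using orth_proj_P orth_proj_Ps[of k] unfolding Q_def by auto

lemma Q_carrier: "k \<in> {0..s} \<Longrightarrow> Q k \<in> carrier_mat n n"
  using orth_proj_Q unfolding orth_proj_def by blast

lemma Ps_mult_P:
  assumes k: "k \<in> {1..s}"
  shows "Ps k * P = P"
proof -
  have "P \<in> carrier_mat n n" "Ps k \<in> carrier_mat n n" "mat_adjoint P = P" "mat_adjoint (Ps k) = Ps k"
    using orth_proj_P orth_proj_Ps[OF k] unfolding orth_proj_def by auto
  then have "Ps k * P = mat_adjoint (P * Ps k)" by (simp add: mat_adjoint_mult)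
  then show ?thesis using P_mult_Ps[OF k] \<open>mat_adjoint P = P\<close> by simp
qed

lemma Q_mult_Q:
  assumes "k \<in> {0..s}" "k' \<in> {0..s}"
  shows "Q k * Q k' = Q (if k = k' then k else 0)"
  using assms orth_proj_Q[of k] P_mult_Ps[of k'] Ps_mult_P[of k] Ps_mult_Ps[of k k']
  unfolding Q_def orth_proj_def by (auto split: if_splits)

context
  fixes \<psi> :: "complex vec"
  assumes unit_\<psi>: "unit_vec_c n \<psi>"
begin

definition Q\<psi> :: "nat \<Rightarrow> complex vec" where
  "Q\<psi> k = Q k *\<^sub>v \<psi>"

definition a :: real where
  "a = cnorm2 n (Q\<psi> 0)"

definition w :: "nat \<Rightarrow> real" where
  "w k = cnorm2 n (Q\<psi> k) - a"

definition D :: "complex mat" where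
  "D = P * ketbra \<psi> * P - (1 / of_nat s) \<cdot>\<^sub>m mat_sum n (\<lambda>i. Ps i * ketbra \<psi> * Ps i) {1..s}"

lemma \<psi>_carrier: "\<psi> \<in> carrier_vec n"
  using unit_\<psi> unfolding unit_vec_c_def by auto

lemma cnorm2_\<psi>: "cnorm2 n \<psi> = 1"
proof -
  have "cinner n \<psi> \<psi> = 1"
    using unit_\<psi> unfolding unit_vec_c_def cinner_def by (auto simp: scalar_prod_def)
  then show ?thesis by (simp add: cinner_self)
qed

lemma Q\<psi>_carrier: "k \<in> {0..s} \<Longrightarrow> Q\<psi> k \<in> carrier_vec n"
  unfolding Q\<psi>_def using Q_carrier \<psi>_carrier by (rule mult_mat_vec_carrier)

lemma D_carrier: "D \<in> carrier_mat n n"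
  using orth_proj_P \<psi>_carrier unfolding D_def mat_sum_def orth_proj_def ketbra_def by auto

lemma D_index:
  assumes i: "i < n" and j: "j < n"
  shows "D $$ (i,j) = (\<Sum>k\<in>{0..<Suc s}. of_real (weight k) * Q\<psi> k $ i * cnj (Q\<psi> k $ j))"
proof -
  have sandwich: "(Q k * ketbra \<psi> * Q k) $$ (i,j) = Q\<psi> k $ i * cnj (Q\<psi> k $ j)" if "k \<in> {0..s}" for k
    using ketbra_sandwich_index[OF _ _ \<psi>_carrier i j] orth_proj_Q[OF that]
    unfolding Q\<psi>_def orth_proj_def by auto
  have "ketbra \<psi> \<in> carrier_mat n n" using \<psi>_carrier unfolding ketbra_def by auto
  then have "D $$ (i,j) = (Q 0 * ketbra \<psi> * Q 0) $$ (i,j)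
      - (1 / of_nat s) * (\<Sum>k\<in>{1..s}. (Q k * ketbra \<psi> * Q k) $$ (i,j))"
    unfolding D_def mat_sum_def Q_def using i j orth_proj_P unfolding orth_proj_def by auto
  also have "\<dots> = Q\<psi> 0 $ i * cnj (Q\<psi> 0 $ j)
      + (\<Sum>k\<in>{1..s}. of_real (weight k) * Q\<psi> k $ i * cnj (Q\<psi> k $ j))"
    by (simp add: sandwich sum_distrib_left weight_def sum_negf[symmetric] mult.assoc)
  also have "\<dots> = (\<Sum>k\<in>{0..<Suc s}. of_real (weight k) * Q\<psi> k $ i * cnj (Q\<psi> k $ j))"
    by (simp add: atLeastLessThanSuc_atLeastAtMost sum.atLeast_Suc_atMost weight_def)
  finally show ?thesis .
qed

lemma cinner_Q\<psi>:
  assumes k: "k \<in> {0..s}" and k': "k' \<in> {0..s}"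
  shows "cinner n (Q\<psi> k) (Q\<psi> k') = a + (if k = k' then w k else 0)"
proof -
  have "cinner n (Q\<psi> k) (Q\<psi> k') = cinner n \<psi> (Q k *\<^sub>v (Q k' *\<^sub>v \<psi>))"
    using orth_proj_Q[OF k] Q\<psi>_carrier[OF k'] \<psi>_carrier unfolding Q\<psi>_def orth_proj_def
    by (simp add: hermitian_cinner)
  also have "\<dots> = cinner n \<psi> (Q (if k = k' then k else 0) *\<^sub>v \<psi>)"
    using Q_carrier[OF k] Q_carrier[OF k'] \<psi>_carrier Q_mult_Q[OF k k']
    by (metis assoc_mult_mat_vec)
  also have "\<dots> = cnorm2 n (Q\<psi> (if k = k' then k else 0))"
    using orth_proj_Q[of "if k = k' then k else 0"] k \<psi>_carrier unfolding Q\<psi>_def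
    by (simp add: orth_proj_cinner)
  finally show ?thesis unfolding w_def a_def by simp
qed

lemma cinner_\<psi>_Q\<psi>: "k \<in> {0..s} \<Longrightarrow> cinner n \<psi> (Q\<psi> k) = cnorm2 n (Q\<psi> k)"
  using orth_proj_cinner[OF orth_proj_Q \<psi>_carrier] unfolding Q\<psi>_def by simp

definition y :: "nat \<Rightarrow> complex vec" where
  "y k = (if k = 0 then Q\<psi> 0 else Q\<psi> k - Q\<psi> 0)"

lemma cinner_y:
  assumes "k \<in> {0..s}" "k' \<in> {0..s}"
  shows "cinner n (y k) (y k') = (if k = k' then (if k = 0 then a else w k) else 0)"
  using assms Q\<psi>_carrier[of 0] Q\<psi>_carrier[of k] Q\<psi>_carrier[of k']
  by (auto simp: y_def cinner_diff_left cinner_diff_right cinner_Q\<psi> w_def a_def)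

lemma cinner_\<psi>_y:
  assumes "k \<in> {0..s}"
  shows "cinner n \<psi> (y k) = (if k = 0 then a else w k)"
  using assms Q\<psi>_carrier[of 0] Q\<psi>_carrier[of k]
  by (auto simp: y_def cinner_diff_right cinner_\<psi>_Q\<psi> w_def a_def)

lemma cnorm2_y: "k \<in> {0..s} \<Longrightarrow> cnorm2 n (y k) = (if k = 0 then a else w k)"
  using cinner_y[of k k] cinner_self[of n "y k"] by simp

lemma w_nonneg: "k \<in> {1..s} \<Longrightarrow> w k \<ge> 0"
  using cnorm2_y[of k] cnorm2_nonneg[of n "y k"] by auto

lemma w_0: "w 0 = 0"
  unfolding w_def a_def by simp

lemma a_nonneg: "a \<ge> 0"
  unfolding a_def by (rule cnorm2_nonneg)

lemma a_plus_sum_w_le_1: "a + (\<Sum>k\<in>{1..s}. w k) \<le> 1"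
proof -
  have "(\<Sum>k\<in>{0..s}. cnorm2 n (y k)) \<le> cnorm2 n \<psi>"
    by (rule bessel_inequality) (auto simp: cinner_y cinner_\<psi>_y)
  moreover have "(\<Sum>k\<in>{0..s}. cnorm2 n (y k)) = a + (\<Sum>k\<in>{1..s}. w k)"
    by (simp add: sum.atLeast_Suc_atMost cnorm2_y)
  ultimately show ?thesis using cnorm2_\<psi> by simp
qed

lemma Re_trace_D:
  "Re (trace (mat_adjoint D * D)) = (\<Sum>k\<in>{1..s}. 2 * a * w k + (w k)\<^sup>2) / (real s)\<^sup>2"
proof -
  have "trace (mat_adjoint D * D) = (\<Sum>k\<in>{0..s}. \<Sum>k'\<in>{0..s}.
      of_real (weight k * weight k' * (a + (if k = k' then w k else 0))\<^sup>2))"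
    using trace_adjoint_mult_outer_sum[OF D_carrier D_index]
    by (simp add: atLeastLessThanSuc_atLeastAtMost cinner_Q\<psi> power2_eq_square mult.assoc)
  then have "Re (trace (mat_adjoint D * D))
      = a\<^sup>2 * (\<Sum>k\<in>{0..s}. weight k)\<^sup>2 + (\<Sum>k\<in>{0..s}. (weight k)\<^sup>2 * (2 * a * w k + (w k)\<^sup>2))"
    by (simp add: sum_weighted_gram_squared)
  also have "(\<Sum>k\<in>{0..s}. weight k) = 0"
    using s_pos by (simp add: sum.atLeast_Suc_atMost weight_def)
  also have "(\<Sum>k\<in>{0..s}. (weight k)\<^sup>2 * (2 * a * w k + (w k)\<^sup>2))
      = (\<Sum>k\<in>{1..s}. 2 * a * w k + (w k)\<^sup>2) / (real s)\<^sup>2"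
    by (simp add: sum.atLeast_Suc_atMost weight_def w_0 power_divide flip: sum_divide_distrib)
  finally show ?thesis by simp
qed

lemma Re_trace_D_le: "Re (trace (mat_adjoint D * D)) \<le> 1 / (real s)\<^sup>2"
proof -
  define W where "W = (\<Sum>k\<in>{1..s}. w k)"
  have "W \<ge> 0" unfolding W_def using w_nonneg by (auto intro: sum_nonneg)
  have "(\<Sum>k\<in>{1..s}. 2 * a * w k + (w k)\<^sup>2) = 2 * a * W + (\<Sum>k\<in>{1..s}. (w k)\<^sup>2)"
    unfolding W_def by (simp add: sum.distrib sum_distrib_left)
  also have "\<dots> \<le> 2 * a * W + W\<^sup>2"
    using sum_squares_le_square_sum[of "{1..s}" w] w_nonneg unfolding W_def by auto
  also have "\<dots> \<le> (a + W)\<^sup>2" by (simp add: power2_eq_square algebra_simps)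
  also have "\<dots> \<le> 1"
    using a_plus_sum_w_le_1 \<open>W \<ge> 0\<close> a_nonneg unfolding W_def by (simp add: power_le_one)
  finally show ?thesis unfolding Re_trace_D by (simp add: divide_right_mono)
qed

lemma trace_dist_le:
  "trace_dist (P * ketbra \<psi> * P) ((1 / of_nat s) \<cdot>\<^sub>m mat_sum n (\<lambda>i. Ps i * ketbra \<psi> * Ps i) {1..s})
    \<le> sqrt (1 / real s)"
proof -
  define T where "T = trace_norm D"
  define X where "X = mat n (Suc s) (\<lambda>(i,k). Q\<psi> k $ i)"
  define Y where "Y = mat (Suc s) n (\<lambda>(k,j). of_real (weight k) * cnj (Q\<psi> k $ j))"
  have "D = X * Y"
    unfolding X_def Y_def by (rule outer_sum_factor[OF D_carrier D_index])
  moreover have "X \<in> carrier_mat n (Suc s)" "Y \<in> carrier_mat (Suc s) n"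
    unfolding X_def Y_def by auto
  ultimately have "T\<^sup>2 \<le> real (Suc s) * Re (trace (mat_adjoint D * D))"
    unfolding T_def using trace_norm_mult_squared_le by metis
  also have "\<dots> \<le> real (Suc s) * (1 / (real s)\<^sup>2)"
    using Re_trace_D_le by (intro mult_left_mono) auto
  also have "\<dots> \<le> 4 * (1 / real s)"
    using s_pos by (simp add: field_simps power2_eq_square)
  finally have "(T / 2)\<^sup>2 \<le> 1 / real s" by (simp add: power_divide)
  then have "T / 2 \<le> sqrt (1 / real s)"
    by (rule real_le_rsqrt)
  then show ?thesis unfolding trace_dist_def T_def D_def .
qed

end

end

theorem lemma1:
  fixes n s :: nat and Ps :: "nat \<Rightarrow> complex mat" and P :: "complex mat"
  assumes "s \<ge> 2"
    and "\<And>i. i \<in> {1..s} \<Longrightarrow> orth_proj n (Ps i)"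
    and "orth_proj n P"
    and "\<And>i j. i \<in> {1..s} \<Longrightarrow> j \<in> {1..s} \<Longrightarrow> Ps i * Ps j = Ps j * Ps i"
    and "\<And>i. i \<in> {1..s} \<Longrightarrow> P * Ps i = P"
    and "\<And>i j. i \<in> {1..s} \<Longrightarrow> j \<in> {1..s} \<Longrightarrow> i \<noteq> j \<Longrightarrow> Ps i * Ps j = P"
  shows "\<forall>\<psi>. unit_vec_c n \<psi> \<longrightarrow>
           trace_dist (P * ketbra \<psi> * P)
             ((1 / of_nat s) \<cdot>\<^sub>m mat_sum n (\<lambda>i. Ps i * ketbra \<psi> * Ps i) {1..s})
           \<le> sqrt (1 / real s)"
proof -
  interpret projector_family n s Ps P
    using assms(1,2,3,5,6) by unfold_locales auto
  show ?thesis using trace_dist_le by blast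
qed

end
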